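(* Let $\Lambda=\mathbb Z[t^{\pm1}]$ and suppose $0\in W\subseteq\Lambda$. Then $W=\Lambda$ if and only if $W$ is closed under each of the following four binary operations: (1) $(w_1,w_2)\mapsto tw_1+(1-t)w_2$; (2) $(w_1,w_2)\mapsto 1+tw_1+(t-1)w_2$; (3) $(w_1,w_2)\mapsto t^{-1}w_1+(1-t^{-1})w_2$; (4) $(w_1,w_2)\mapsto -t^{-1}+t^{-1}w_1+(t^{-1}-1)w_2$. *)

theory Defs
  imports Main "HOL-Library.Poly_Mapping"
begin

text \<open>The Laurent polynomial ring Lambda = Z[t, t^-1], realised as the integral
group ring of the additive group Z: finitely supported maps int => int with
convolution product. The monomial t^k is Poly_Mapping.single k 1.\<close>

type_synonym laurent = "int \<Rightarrow>\<^sub>0 int"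

definition lt :: laurent where
  "lt = Poly_Mapping.single 1 1"

definition lt_inv :: laurent where
  "lt_inv = Poly_Mapping.single (-1) 1"

end

theory Submission
  imports Defs
begin

text \<open>Call \<open>u\<close> a stabilizing translation of \<open>W\<close> if \<open>W + u = W\<close>. These form an additive
subgroup, and if \<open>W\<close> is preserved by multiplication by the units \<open>t\<close> and \<open>t\<^sup>-\<^sup>1\<close> (the
operations (1) and (3) with \<open>w\<^sub>2 = 0\<close>), the subgroup is also closed under these
multiplications, hence is a \<open>\<Lambda>\<close>-submodule of \<open>\<Lambda>\<close>. Operations (2) and (4) with
\<open>w\<^sub>2 = 0\<close> show that \<open>1\<close> is a stabilizing translation. So every element of \<open>\<Lambda>\<close> is one,
and \<open>0 \<in> W\<close> gives \<open>W = \<Lambda>\<close>.\<close>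

definition stabilizing_translation :: "'a::ab_group_add set \<Rightarrow> 'a \<Rightarrow> bool" where
  "stabilizing_translation W u \<longleftrightarrow> (\<forall>w\<in>W. w + u \<in> W \<and> w - u \<in> W)"

lemma stabilizing_translation_diff:
  assumes "stabilizing_translation W u" and "stabilizing_translation W v"
  shows "stabilizing_translation W (u - v)"
  using assms unfolding stabilizing_translation_def
  by (metis add_diff_eq diff_diff_eq2)

lemma stabilizing_translation_mult_unit:
  fixes a b :: "'a::comm_ring_1"
  assumes "a * b = 1"
    and "\<forall>w\<in>W. a * w \<in> W" and "\<forall>w\<in>W. b * w \<in> W"
    and "stabilizing_translation W u"
  shows "stabilizing_translation W (a * u)"
proof -
  have "w + a * u = a * (b * w + u)" "w - a * u = a * (b * w - u)" for w
    using \<open>a * b = 1\<close> by (simp_all add: algebra_simps flip: mult.assoc)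
  then show ?thesis
    using assms(2-4) unfolding stabilizing_translation_def by metis
qed

lemma stabilizing_translation_all_imp_UNIV:
  assumes "x \<in> W" and "\<And>u. stabilizing_translation W u"
  shows "W = UNIV"
proof -
  have "y \<in> W" for y
    using assms unfolding stabilizing_translation_def by (metis add_diff_cancel_left')
  then show ?thesis by blast
qed

lemma lt_mult_lt_inv: "lt * lt_inv = 1"
  by (simp add: lt_def lt_inv_def mult_single)

lemma lt_inv_mult_lt: "lt_inv * lt = 1"
  by (simp add: lt_mult_lt_inv mult.commute)

lemma lt_mult_single: "lt * Poly_Mapping.single k c = Poly_Mapping.single (k + 1) (c::int)"
  by (simp add: lt_def mult_single add.commute)

lemma lt_inv_mult_single: "lt_inv * Poly_Mapping.single k c = Poly_Mapping.single (k - 1) (c::int)"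
  by (simp add: lt_inv_def mult_single)

lemma laurent_induct [case_names one lt lt_inv diff]:
  assumes one: "P 1"
    and lt: "\<And>u. P u \<Longrightarrow> P (lt * u)"
    and lt_inv: "\<And>u. P u \<Longrightarrow> P (lt_inv * u)"
    and diff: "\<And>u v. P u \<Longrightarrow> P v \<Longrightarrow> P (u - v)"
  shows "P p"
proof -
  have monomial: "P (frag_of k)" for k
  proof (induction k rule: int_induct[where k = 0])
    case base
    show ?case using one by simp
  next
    case (step1 i)
    then show ?case using lt by (metis lt_mult_single)
  next
    case (step2 i)
    then show ?case using lt_inv by (metis lt_inv_mult_single)
  qed
  have "P 0"
    using diff[OF one one] by simp
  then show ?thesis
    using frag_induction[of p UNIV P] monomial diff by blast
qed

theorem lemma14:
  fixes W :: "laurent set"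
  assumes "0 \<in> W"
  shows "W = UNIV \<longleftrightarrow>
    ((\<forall>w1\<in>W. \<forall>w2\<in>W. lt * w1 + (1 - lt) * w2 \<in> W) \<and>
     (\<forall>w1\<in>W. \<forall>w2\<in>W. 1 + lt * w1 + (lt - 1) * w2 \<in> W) \<and>
     (\<forall>w1\<in>W. \<forall>w2\<in>W. lt_inv * w1 + (1 - lt_inv) * w2 \<in> W) \<and>
     (\<forall>w1\<in>W. \<forall>w2\<in>W. - lt_inv + lt_inv * w1 + (lt_inv - 1) * w2 \<in> W))"
  (is "_ \<longleftrightarrow> ?op1 \<and> ?op2 \<and> ?op3 \<and> ?op4")
proof
  assume "?op1 \<and> ?op2 \<and> ?op3 \<and> ?op4"
  then have lt_W: "\<forall>w\<in>W. lt * w \<in> W" and lt_inv_W: "\<forall>w\<in>W. lt_inv * w \<in> W"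
    and op2: "\<forall>w\<in>W. 1 + lt * w \<in> W" and op4: "\<forall>w\<in>W. - lt_inv + lt_inv * w \<in> W"
    using \<open>0 \<in> W\<close> by (metis add_0_right mult_zero_right)+
  have "w + 1 = 1 + lt * (lt_inv * w)" "w - 1 = lt * (- lt_inv + lt_inv * w)" for w
    by (simp_all add: algebra_simps lt_mult_lt_inv flip: mult.assoc)
  then have "stabilizing_translation W 1"
    using lt_W lt_inv_W op2 op4 unfolding stabilizing_translation_def by metis
  then have "stabilizing_translation W u" for u
  proof (induction u rule: laurent_induct)
    case (lt u)
    then show ?case
      using stabilizing_translation_mult_unit[OF lt_mult_lt_inv lt_W lt_inv_W] by blast
  next
    case (lt_inv u)
    then show ?case
      using stabilizing_translation_mult_unit[OF lt_inv_mult_lt lt_inv_W lt_W] by blast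
  qed (simp_all add: stabilizing_translation_diff)
  with \<open>0 \<in> W\<close> show "W = UNIV"
    by (rule stabilizing_translation_all_imp_UNIV)
qed simp

end
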